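(* Let $m>1$ and $n>0$ be integers. Then the size of the largest clique in ${\rm SR}(m,n)$ is $\max(m,n+1)$.
   Context: ${\rm SR}(m,n)$ is the graph whose vertices are the vectors in $\{0,1,2,\dots\}^m$ with coordinate sum $n$, two vertices being adjacent when they differ in precisely two coordinate positions. *)

theory Defs
  imports Main
begin

text \<open>Vertices of SR(m,n): vectors in {0,1,2,...}^m (coordinates indexed by 0..m-1,
  represented as functions nat => nat vanishing outside {..<m}) with coordinate sum n.\<close>
definition SR_vertices :: "nat \<Rightarrow> nat \<Rightarrow> (nat \<Rightarrow> nat) set" where
  "SR_vertices m n = {x. (\<forall>i\<ge>m. x i = 0) \<and> (\<Sum>i<m. x i) = n}"

definition SR_adj :: "nat \<Rightarrow> (nat \<Rightarrow> nat) \<Rightarrow> (nat \<Rightarrow> nat) \<Rightarrow> bool" where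
  "SR_adj m x y \<longleftrightarrow> card {i. i < m \<and> x i \<noteq> y i} = 2"

definition SR_clique :: "nat \<Rightarrow> nat \<Rightarrow> (nat \<Rightarrow> nat) set \<Rightarrow> bool" where
  "SR_clique m n C \<longleftrightarrow> C \<subseteq> SR_vertices m n \<and>
     (\<forall>x\<in>C. \<forall>y\<in>C. x \<noteq> y \<longrightarrow> SR_adj m x y)"

definition SR_clique_number :: "nat \<Rightarrow> nat \<Rightarrow> nat" where
  "SR_clique_number m n = Max (card ` {C. SR_clique m n C})"

end

theory Submission
  imports Defs
begin

text \<open>Fix a vertex x of a clique C. For every other w \<in> C the set D(x,w) of coordinates where
  x and w differ is a pair. Two such pairs meet, since otherwise the two vertices would differ
  in four coordinates, and they cannot form a triangle {a,c}, {c,b}, {a,b}: adjacent vertices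
  keep the sum of their two differing coordinates, which forces a contradiction. Hence either
  all pairs coincide, and then C is determined by one coordinate in {0..n}, or all pairs share
  a common coordinate c, and then w \<mapsto> D(x,w) is injective on C - {x} with at most m - 1 values.
  Both bounds are attained: by the vectors n e_i, and by the vectors (k, n - k, 0, ..., 0).\<close>

definition differing_coords :: "nat \<Rightarrow> (nat \<Rightarrow> nat) \<Rightarrow> (nat \<Rightarrow> nat) \<Rightarrow> nat set" where
  "differing_coords m x y = {i. i < m \<and> x i \<noteq> y i}"

lemma differing_coords_commute: "differing_coords m x y = differing_coords m y x"
  unfolding differing_coords_def by auto

lemma finite_differing_coords: "finite (differing_coords m x y)"
  unfolding differing_coords_def by auto

lemma differing_coords_self [simp]: "differing_coords m x x = {}"
  unfolding differing_coords_def by auto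

lemma differing_coords_less: "i \<in> differing_coords m x y \<Longrightarrow> i < m"
  unfolding differing_coords_def by auto

lemma differing_coords_subset_Un:
  "differing_coords m y z \<subseteq> differing_coords m x y \<union> differing_coords m x z"
  unfolding differing_coords_def by auto

lemma differing_coords_Diff_subset:
  "differing_coords m x y - differing_coords m x z \<subseteq> differing_coords m y z"
  unfolding differing_coords_def by auto

lemma card_2_obtain_other:
  assumes "card A = 2" and "a \<in> A"
  obtains b where "b \<noteq> a" and "A = {a, b}"
proof -
  obtain x y where xy: "x \<noteq> y" "A = {x, y}" using assms(1) by (auto simp: card_2_iff)
  show ?thesis
  proof (cases "a = x")
    case True
    with xy show ?thesis using that[of y] by auto
  next
    case False
    with xy assms(2) show ?thesis using that[of x] by (auto simp: insert_commute)
  qed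
qed

lemma SR_vertex_coord_le:
  assumes "x \<in> SR_vertices m n"
  shows "x i \<le> n"
proof (cases "i < m")
  case True
  then have "x i \<le> (\<Sum>l<m. x l)" by (intro member_le_sum) auto
  with assms show ?thesis by (simp add: SR_vertices_def)
qed (use assms in \<open>simp add: SR_vertices_def\<close>)

lemma finite_SR_vertices: "finite (SR_vertices m n)"
proof (rule finite_subset)
  show "SR_vertices m n \<subseteq>
    {x. \<forall>i. (i \<in> {..<m} \<longrightarrow> x i \<in> {0..n}) \<and> (i \<notin> {..<m} \<longrightarrow> x i = 0)}"
    using SR_vertex_coord_le by (auto simp: SR_vertices_def)
qed (rule finite_set_of_finite_funs; simp)

lemma SR_vertices_eqI:
  assumes "x \<in> SR_vertices m n" and "y \<in> SR_vertices m n" and "differing_coords m x y = {}"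
  shows "x = y"
  using assms unfolding SR_vertices_def differing_coords_def by (auto intro!: ext) (metis not_le)

lemma SR_vertices_pair_sum_eq:
  assumes x: "x \<in> SR_vertices m n" and y: "y \<in> SR_vertices m n"
    and D: "differing_coords m x y \<subseteq> {i, j}" and "i \<noteq> j" "i < m" "j < m"
  shows "x i + x j = y i + y j"
proof -
  have pair: "{i, j} \<subseteq> {..<m}" using assms by auto
  have rest: "(\<Sum>l\<in>{..<m} - {i, j}. x l) = (\<Sum>l\<in>{..<m} - {i, j}. y l)"
    using D by (intro sum.cong) (auto simp: differing_coords_def)
  have "(\<Sum>l<m. x l) = (\<Sum>l<m. y l)" using x y by (simp add: SR_vertices_def)
  with rest show ?thesis
    using sum.subset_diff[OF pair, of x] sum.subset_diff[OF pair, of y] \<open>i \<noteq> j\<close> by simp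
qed

lemma SR_vertices_eq_if_differ_within_pair:
  assumes x: "x \<in> SR_vertices m n" and y: "y \<in> SR_vertices m n"
    and D: "differing_coords m x y \<subseteq> {i, j}" and "i < m" "j < m" and "x i = y i"
  shows "x = y"
proof (cases "i = j")
  case True
  with D \<open>x i = y i\<close> show ?thesis
    by (intro SR_vertices_eqI[OF x y]) (auto simp: differing_coords_def)
next
  case False
  with SR_vertices_pair_sum_eq[OF x y D] assms(4,5) \<open>x i = y i\<close> have "x j = y j" by simp
  with D \<open>x i = y i\<close> show ?thesis
    by (intro SR_vertices_eqI[OF x y]) (auto simp: differing_coords_def)
qed

lemma card_le_if_differ_within_pair:
  assumes C: "C \<subseteq> SR_vertices m n" and "i < m" "j < m"
    and D: "\<forall>y\<in>C. \<forall>z\<in>C. differing_coords m y z \<subseteq> {i, j}"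
  shows "card C \<le> n + 1"
proof -
  have "inj_on (\<lambda>y. y i) C"
  proof (rule inj_onI)
    fix y z assume "y \<in> C" "z \<in> C" "y i = z i"
    with assms show "y = z" by (intro SR_vertices_eq_if_differ_within_pair[of y m n z i j]) auto
  qed
  moreover have "(\<lambda>y. y i) ` C \<subseteq> {..n}" using C SR_vertex_coord_le by fastforce
  ultimately have "card C \<le> card {..n}" by (intro card_inj_on_le) auto
  then show ?thesis by simp
qed

lemma SR_clique_finite: "SR_clique m n C \<Longrightarrow> finite C"
  unfolding SR_clique_def using finite_SR_vertices finite_subset by blast

lemma SR_clique_card_differing_coords:
  "SR_clique m n C \<Longrightarrow> x \<in> C \<Longrightarrow> y \<in> C \<Longrightarrow> x \<noteq> y \<Longrightarrow> card (differing_coords m x y) = 2"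
  unfolding SR_clique_def SR_adj_def differing_coords_def by auto

lemma SR_clique_differing_coords_meet:
  assumes cl: "SR_clique m n C" and "x \<in> C" "y \<in> C" "z \<in> C" "x \<noteq> y" "x \<noteq> z"
  shows "differing_coords m x y \<inter> differing_coords m x z \<noteq> {}"
proof
  assume disj: "differing_coords m x y \<inter> differing_coords m x z = {}"
  have xy: "card (differing_coords m x y) = 2" and xz: "card (differing_coords m x z) = 2"
    using SR_clique_card_differing_coords[OF cl] assms by auto
  then have "y \<noteq> z" using disj by auto
  have "differing_coords m x y \<union> differing_coords m x z \<subseteq> differing_coords m y z"
    using disj differing_coords_Diff_subset[of m x y z] differing_coords_Diff_subset[of m x z y]
    by (auto simp: differing_coords_commute[of m z y])
  then have "card (differing_coords m x y \<union> differing_coords m x z) \<le> card (differing_coords m y z)"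
    by (intro card_mono finite_differing_coords)
  also have "\<dots> = 2" using SR_clique_card_differing_coords[OF cl] assms \<open>y \<noteq> z\<close> by auto
  finally show False
    using disj xy xz by (simp add: card_Un_disjoint finite_differing_coords)
qed

text \<open>The vertices w and u differ exactly in {d, e}.\<close>
lemma SR_clique_agree_at_common_coord:
  assumes cl: "SR_clique m n C" and "x \<in> C" "w \<in> C" "u \<in> C"
    and w: "differing_coords m x w = {c, d}" and u: "differing_coords m x u = {c, e}"
    and "c \<noteq> d" "c \<noteq> e" "d \<noteq> e"
  shows "w c = u c"
proof -
  have "w \<noteq> u" using w u assms by (auto simp: doubleton_eq_iff)
  have "{d, e} \<subseteq> differing_coords m w u"
    using w u assms differing_coords_Diff_subset[of m x w u] differing_coords_Diff_subset[of m x u w]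
    by (auto simp: differing_coords_commute[of m u w])
  moreover have "card {d, e} = card (differing_coords m w u)"
    using SR_clique_card_differing_coords[OF cl] assms \<open>w \<noteq> u\<close> by auto
  ultimately have "differing_coords m w u = {d, e}"
    by (metis card_subset_eq finite_differing_coords)
  moreover have "c < m" using w differing_coords_less by blast
  ultimately show ?thesis using assms unfolding differing_coords_def by auto
qed

lemma SR_clique_no_triangle:
  assumes cl: "SR_clique m n C" and xC: "x \<in> C" and yC: "y \<in> C" and zC: "z \<in> C" and wC: "w \<in> C"
    and y: "differing_coords m x y = {i, j}" and z: "differing_coords m x z = {j, k}"
    and w: "differing_coords m x w = {i, k}" and "i \<noteq> j" "j \<noteq> k" "i \<noteq> k"
  shows False
proof -
  have V: "v \<in> SR_vertices m n" if "v \<in> C" for v using cl that by (auto simp: SR_clique_def)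
  have "i < m" "j < m" "k < m" using y z differing_coords_less by blast+
  have "y j = z j"
    using SR_clique_agree_at_common_coord[OF cl xC yC zC, of j i k] y z assms
    by (simp add: insert_commute)
  moreover have "y i = w i"
    using SR_clique_agree_at_common_coord[OF cl xC yC wC, of i j k] y w assms by simp
  moreover have "z k = w k"
    using SR_clique_agree_at_common_coord[OF cl xC zC wC, of k j i] z w assms
    by (simp add: insert_commute)
  moreover have "x i + x j = y i + y j"
    using SR_vertices_pair_sum_eq[OF V[OF xC] V[OF yC], of i j] y \<open>i \<noteq> j\<close> \<open>i < m\<close> \<open>j < m\<close> by simp
  moreover have "x j + x k = z j + z k"
    using SR_vertices_pair_sum_eq[OF V[OF xC] V[OF zC], of j k] z \<open>j \<noteq> k\<close> \<open>j < m\<close> \<open>k < m\<close> by simp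
  moreover have "x i + x k = w i + w k"
    using SR_vertices_pair_sum_eq[OF V[OF xC] V[OF wC], of i k] w \<open>i \<noteq> k\<close> \<open>i < m\<close> \<open>k < m\<close> by simp
  ultimately have "x j = y j" by linarith
  then show False using y unfolding differing_coords_def by auto
qed

lemma SR_clique_common_coord:
  assumes cl: "SR_clique m n C" and xC: "x \<in> C" and yC: "y \<in> C - {x}" and zC: "z \<in> C - {x}"
    and yz: "differing_coords m x y \<noteq> differing_coords m x z"
    and c: "c \<in> differing_coords m x y" "c \<in> differing_coords m x z"
    and wC: "w \<in> C - {x}"
  shows "c \<in> differing_coords m x w"
proof (rule ccontr)
  assume cw: "c \<notin> differing_coords m x w"
  obtain a where "a \<noteq> c" and y: "differing_coords m x y = {c, a}"
    using SR_clique_card_differing_coords[OF cl] xC yC c card_2_obtain_other by (metis DiffE singletonI)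
  obtain b where "b \<noteq> c" and z: "differing_coords m x z = {c, b}"
    using SR_clique_card_differing_coords[OF cl] xC zC c card_2_obtain_other by (metis DiffE singletonI)
  have "a \<noteq> b" using y z yz by auto
  have "{a, b} \<subseteq> differing_coords m x w"
    using SR_clique_differing_coords_meet[OF cl xC, of y w] SR_clique_differing_coords_meet[OF cl xC, of z w]
      yC zC wC y z cw by auto
  moreover have "card {a, b} = card (differing_coords m x w)"
    using SR_clique_card_differing_coords[OF cl] xC wC \<open>a \<noteq> b\<close> by auto
  ultimately have "differing_coords m x w = {a, b}"
    by (metis card_subset_eq finite_differing_coords)
  then show False
    using SR_clique_no_triangle[OF cl xC _ _ _ _ _ _ \<open>a \<noteq> c\<close>, of y z w b] yC zC wC y z
      \<open>a \<noteq> b\<close> \<open>b \<noteq> c\<close> by (simp add: insert_commute)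
qed

lemma SR_clique_card_le_if_common_coord:
  assumes cl: "SR_clique m n C" and xC: "x \<in> C" and yC: "y \<in> C - {x}" and zC: "z \<in> C - {x}"
    and yz: "differing_coords m x y \<noteq> differing_coords m x z"
    and c: "\<forall>w\<in>C - {x}. c \<in> differing_coords m x w"
  shows "card C \<le> m"
proof -
  have V: "v \<in> SR_vertices m n" if "v \<in> C" for v using cl that by (auto simp: SR_clique_def)
  have "c < m" using c yC differing_coords_less by blast
  have pair: "\<exists>d. d \<noteq> c \<and> d < m \<and> differing_coords m x w = {c, d}" if "w \<in> C - {x}" for w
    using SR_clique_card_differing_coords[OF cl xC] c that card_2_obtain_other differing_coords_less
    by (metis DiffE insertCI singletonI)
  have "inj_on (differing_coords m x) (C - {x})"
  proof (rule inj_onI)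
    fix w w' assume wC: "w \<in> C - {x}" and w'C: "w' \<in> C - {x}"
      and eq: "differing_coords m x w = differing_coords m x w'"
    obtain d where "d \<noteq> c" "d < m" and w: "differing_coords m x w = {c, d}" using pair wC by blast
    obtain u where uC: "u \<in> C - {x}" and "differing_coords m x u \<noteq> {c, d}"
      using yC zC yz by blast
    then obtain e where "e \<noteq> c" "e \<noteq> d" and u: "differing_coords m x u = {c, e}"
      using pair by blast
    have "w c = u c" "w' c = u c"
      using SR_clique_agree_at_common_coord[OF cl xC _ _ _ u] wC w'C uC w eq
        \<open>d \<noteq> c\<close> \<open>e \<noteq> c\<close> \<open>e \<noteq> d\<close> by auto
    moreover have "differing_coords m w w' \<subseteq> {c, d}"
      using differing_coords_subset_Un[of m w w' x] w eq by (simp add: differing_coords_commute)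
    ultimately show "w = w'"
      using SR_vertices_eq_if_differ_within_pair[OF V V] wC w'C \<open>c < m\<close> \<open>d < m\<close> by auto
  qed
  moreover have "differing_coords m x ` (C - {x}) \<subseteq> (\<lambda>d. {c, d}) ` ({..<m} - {c})"
    using pair by fastforce
  ultimately have "card (C - {x}) \<le> card ((\<lambda>d. {c, d}) ` ({..<m} - {c}))"
    by (intro card_inj_on_le) auto
  also have "\<dots> \<le> m - 1" using card_image_le[of "{..<m} - {c}"] \<open>c < m\<close> by simp
  finally show ?thesis using SR_clique_finite[OF cl] xC \<open>c < m\<close> by (simp add: card_Diff_singleton)
qed

lemma SR_clique_card_le:
  assumes cl: "SR_clique m n C" and "m > 1"
  shows "card C \<le> max m (n + 1)"
proof (cases "\<exists>x\<in>C. \<exists>y\<in>C. x \<noteq> y")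
  case False
  then have "card C \<le> 1" using card_le_Suc0_iff_eq[OF SR_clique_finite[OF cl]] by auto
  with \<open>m > 1\<close> show ?thesis by simp
next
  case True
  then obtain x y where xC: "x \<in> C" and yC: "y \<in> C - {x}" by blast
  show ?thesis
  proof (cases "\<forall>w\<in>C - {x}. differing_coords m x w = differing_coords m x y")
    case True
    obtain i j where ij: "differing_coords m x y = {i, j}"
      using SR_clique_card_differing_coords[OF cl xC] yC by (metis DiffE card_2_iff singletonI)
    have "i < m" "j < m" using ij differing_coords_less by blast+
    have "differing_coords m x w \<subseteq> {i, j}" if "w \<in> C" for w
      using True that ij by (cases "w = x") auto
    then have "\<forall>w\<in>C. \<forall>w'\<in>C. differing_coords m w w' \<subseteq> {i, j}"
      using differing_coords_subset_Un[of m _ _ x] by blast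
    then have "card C \<le> n + 1"
      using cl \<open>i < m\<close> \<open>j < m\<close> by (intro card_le_if_differ_within_pair) (auto simp: SR_clique_def)
    then show ?thesis by simp
  next
    case False
    then obtain z where zC: "z \<in> C - {x}" and yz: "differing_coords m x y \<noteq> differing_coords m x z"
      by auto
    obtain c where "c \<in> differing_coords m x y" "c \<in> differing_coords m x z"
      using SR_clique_differing_coords_meet[OF cl xC, of y z] yC zC by auto
    then have "card C \<le> m"
      using SR_clique_common_coord[OF cl xC yC zC yz] SR_clique_card_le_if_common_coord[OF cl xC yC zC yz]
      by blast
    then show ?thesis by simp
  qed
qed

lemma ex_SR_clique_card_m:
  assumes "n > 0"
  shows "\<exists>C. SR_clique m n C \<and> card C = m"
proof (intro exI conjI)
  let ?e = "\<lambda>i l::nat. if l = i then n else 0"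
  have "inj_on ?e {..<m}"
    using assms by (intro inj_onI) (metis (full_types) less_numeral_extra(3))
  then show "card (?e ` {..<m}) = m" by (simp add: card_image)
  have "SR_adj m (?e i) (?e j)" if "i < m" "j < m" "i \<noteq> j" for i j
  proof -
    have "{l. l < m \<and> ?e i l \<noteq> ?e j l} = {i, j}" using that assms by auto
    with that show ?thesis unfolding SR_adj_def by simp
  qed
  then show "SR_clique m n (?e ` {..<m})"
    unfolding SR_clique_def SR_vertices_def by auto
qed

lemma ex_SR_clique_card_Suc_n:
  assumes "m > 1"
  shows "\<exists>C. SR_clique m n C \<and> card C = n + 1"
proof (intro exI conjI)
  let ?v = "\<lambda>k l::nat. if l = 0 then k else if l = 1 then n - k else 0"
  have "inj_on ?v {..n}" by (intro inj_onI) (metis (full_types))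
  then show "card (?v ` {..n}) = n + 1" by (simp add: card_image)
  have "(\<Sum>l<m. ?v k l) = (\<Sum>l\<in>{0, 1}. ?v k l)" for k
    using assms by (intro sum.mono_neutral_right) auto
  then have "?v k \<in> SR_vertices m n" if "k \<le> n" for k
    using that assms by (simp add: SR_vertices_def)
  moreover have "SR_adj m (?v i) (?v j)" if "i \<le> n" "j \<le> n" "?v i \<noteq> ?v j" for i j
  proof -
    have "i \<noteq> j" using that(3) by auto
    with that assms have "{l. l < m \<and> ?v i l \<noteq> ?v j l} = {0, 1}" by auto
    then show ?thesis unfolding SR_adj_def by simp
  qed
  ultimately show "SR_clique m n (?v ` {..n})"
    unfolding SR_clique_def by auto
qed

theorem proposition10:
  fixes m n :: nat
  assumes "m > 1" and "n > 0"
  shows "SR_clique_number m n = max m (n + 1)"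
proof -
  let ?K = "card ` {C. SR_clique m n C}"
  have "{C. SR_clique m n C} \<subseteq> Pow (SR_vertices m n)" unfolding SR_clique_def by auto
  then have "finite ?K" using finite_SR_vertices by (meson finite_Pow_iff finite_imageI finite_subset)
  moreover have "\<forall>k\<in>?K. k \<le> max m (n + 1)" using SR_clique_card_le assms(1) by auto
  moreover have "max m (n + 1) \<in> ?K"
  proof -
    have "m \<in> ?K" "n + 1 \<in> ?K"
      using ex_SR_clique_card_m[OF assms(2)] ex_SR_clique_card_Suc_n[OF assms(1)] by force+
    then show ?thesis by (simp add: max_def)
  qed
  ultimately show ?thesis unfolding SR_clique_number_def by (intro Max_eqI) auto
qed

end
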